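(* Let $f:[0,\infty)\to\mathbb{R}$ be locally integrable with $f(u)\ge Bu^\alpha$ for all $u\ge0$, for some $B>0$ and $\alpha\in(1,\infty)$. Let $T>0$, let $v_0\ge0$ be measurable on $\mathbb{R}^n$, and let $v:[0,T]\times\mathbb{R}^n\to[0,\infty]$ be measurable, with $v(t,x)<\infty$ for a.e. $(t,x)\in[0,T]\times\mathbb{R}^n$, satisfying for a.e. $(t,x)\in[0,T]\times\mathbb{R}^n$ $$v(t,x)\ge\int_{\mathbb{R}^n}\Gamma(0,y;t,x)v_0(y)\,dy+\int_0^t\int_{\mathbb{R}^n}\Gamma(0,y;t-\tau,x)f(v(\tau,y))\,dy\,d\tau.$$ Then for a.e. $t\in[0,T]$ $$t^{\frac{1}{\alpha-1}}\Big\|\int_{\mathbb{R}^n}\Gamma(0,y;t,\cdot)v_0(y)\,dy\Big\|_{L^\infty(\mathbb{R}^n)}\le(B(\alpha-1))^{-\frac{1}{\alpha-1}}.$$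
   Context: Standing setting. Let $X=\{X_1,\dots,X_m\}$ be smooth vector fields on $\mathbb{R}^n$, linearly independent as vector fields, satisfying: (H1) there are integers $1=\sigma_1\le\dots\le\sigma_n$ such that, with dilations $\delta_\lambda(x)=(\lambda^{\sigma_1}x_1,\dots,\lambda^{\sigma_n}x_n)$, $\lambda>0$, each $X_j$ is homogeneous of degree $1$, i.e. $X_j(\phi\circ\delta_\lambda)=\lambda\,(X_j\phi)\circ\delta_\lambda$ for all $\phi\in C^\infty(\mathbb{R}^n)$, $\lambda>0$; (H2) Hörmander's rank condition at $0$: the values at $0$ of the vector fields in the Lie algebra generated by $X_1,\dots,X_m$ span $\mathbb{R}^n$. Put $\mathcal{L}:=\sum_{j=1}^mX_j^2$, $\mathcal{H}:=\partial_t-\mathcal{L}$. $\Gamma(t,x;s,y)$ denotes the global fundamental solution (heat kernel) of $\mathcal{H}$; for $t>0$, $x\mapsto\int\Gamma(0,y;t,x)\varphi(y)dy$ is the heat semigroup of $\mathcal{L}$ applied to $\varphi$. Known properties: $\Gamma\ge0$; $\Gamma(t,x;s,y)=0$ if $s\le t$; $\Gamma(0,y;t,x)=\Gamma(0,x;t,y)$; $\int_{\mathbb{R}^n}\Gamma(0,y;t,x)\,dy=1$ for $t>0$; $\Gamma(0,y;t+s,x)=\int\Gamma(0,w;t,x)\Gamma(0,y;s,w)\,dw$ for $t,s>0$. *)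

theory Defs
  imports "HOL-Analysis.Analysis" "HOL-Probability.Essential_Supremum"
begin

coinductive smooth_fun :: "('a::real_normed_vector \<Rightarrow> real) \<Rightarrow> bool" where
  "(\<forall>x. f differentiable (at x)) \<Longrightarrow> (\<forall>v. smooth_fun (\<lambda>x. frechet_derivative f (at x) v))
   \<Longrightarrow> smooth_fun f"

text \<open>A vector field on R^n is given by its coefficient map a; it acts as X phi = sum_i a_i d_i phi.\<close>
definition smooth_vf :: "(real^'n \<Rightarrow> real^'n) \<Rightarrow> bool" where
  "smooth_vf a \<longleftrightarrow> (\<forall>i. smooth_fun (\<lambda>x. a x $ i))"

definition vf_apply :: "(real^'n \<Rightarrow> real^'n) \<Rightarrow> (real^'n \<Rightarrow> real) \<Rightarrow> real^'n \<Rightarrow> real" where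
  "vf_apply a \<phi> x = frechet_derivative \<phi> (at x) (a x)"

definition dil :: "('n \<Rightarrow> nat) \<Rightarrow> real \<Rightarrow> real^'n \<Rightarrow> real^'n" where
  "dil \<sigma> r x = (\<chi> i. r ^ \<sigma> i * x $ i)"

definition hom_deg1 :: "('n \<Rightarrow> nat) \<Rightarrow> (real^'n \<Rightarrow> real^'n) \<Rightarrow> bool" where
  "hom_deg1 \<sigma> a \<longleftrightarrow> (\<forall>\<phi>. smooth_fun \<phi> \<longrightarrow> (\<forall>r>0. \<forall>x.
      vf_apply a (\<phi> \<circ> dil \<sigma> r) x = r * vf_apply a \<phi> (dil \<sigma> r x)))"

definition lie_bracket :: "(real^'n \<Rightarrow> real^'n) \<Rightarrow> (real^'n \<Rightarrow> real^'n) \<Rightarrow> real^'n \<Rightarrow> real^'n" where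
  "lie_bracket a b x = frechet_derivative b (at x) (a x) - frechet_derivative a (at x) (b x)"

inductive_set lie_words :: "(nat \<Rightarrow> real^'n \<Rightarrow> real^'n) \<Rightarrow> nat \<Rightarrow> (real^'n \<Rightarrow> real^'n) set"
  for X m where
  gen: "j < m \<Longrightarrow> X j \<in> lie_words X m"
| brk: "a \<in> lie_words X m \<Longrightarrow> b \<in> lie_words X m \<Longrightarrow> lie_bracket a b \<in> lie_words X m"

definition hormander_setting :: "(nat \<Rightarrow> real^'n \<Rightarrow> real^'n) \<Rightarrow> nat \<Rightarrow> ('n \<Rightarrow> nat) \<Rightarrow> bool" where
  "hormander_setting X m \<sigma> \<longleftrightarrow>
     (\<forall>j<m. smooth_vf (X j)) \<and>
     (\<forall>c. (\<forall>x. (\<Sum>j<m. c j *\<^sub>R X j x) = 0) \<longrightarrow> (\<forall>j<m. c j = 0)) \<and>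
     (\<forall>i. 1 \<le> \<sigma> i) \<and> (\<exists>i. \<sigma> i = 1) \<and>
     (\<forall>j<m. hom_deg1 \<sigma> (X j)) \<and>
     span {a 0 | a. a \<in> lie_words X m} = UNIV"

definition Xsp :: "(real^'n \<Rightarrow> real^'n) \<Rightarrow> (real \<times> (real^'n) \<Rightarrow> real) \<Rightarrow> real \<times> (real^'n) \<Rightarrow> real" where
  "Xsp a g z = frechet_derivative (\<lambda>y. g (fst z, y)) (at (snd z)) (a (snd z))"

definition vf_div :: "(real^'n \<Rightarrow> real^'n) \<Rightarrow> real^'n \<Rightarrow> real" where
  "vf_div a y = (\<Sum>i\<in>UNIV. frechet_derivative (\<lambda>y'. a y' $ i) (at y) (axis i 1))"

definition Xadj :: "(real^'n \<Rightarrow> real^'n) \<Rightarrow> (real \<times> (real^'n) \<Rightarrow> real) \<Rightarrow> real \<times> (real^'n) \<Rightarrow> real" where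
  "Xadj a g z = - Xsp a g z - vf_div a (snd z) * g z"

text \<open>Formal adjoint of H = d_s - sum_j X_j^2, namely H* = -d_s - sum_j (X_j* )^2.\<close>
definition Hadj :: "(nat \<Rightarrow> real^'n \<Rightarrow> real^'n) \<Rightarrow> nat \<Rightarrow> (real \<times> (real^'n) \<Rightarrow> real) \<Rightarrow> real \<times> (real^'n) \<Rightarrow> real" where
  "Hadj X m \<phi> z = - frechet_derivative (\<lambda>s. \<phi> (s, snd z)) (at (fst z)) 1
                   - (\<Sum>j<m. Xadj (X j) (Xadj (X j) \<phi>) z)"

text \<open>Gamma t x s y = Gamma(t,x;s,y): the global fundamental solution (heat kernel) of H,
  i.e. H_{(s,y)} Gamma(t,x;s,y) = delta_{(t,x)} in the sense of distributions on R^{1+n},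
  together with the known properties listed in the standing setting.\<close>
definition heat_kernel :: "(nat \<Rightarrow> real^'n \<Rightarrow> real^'n) \<Rightarrow> nat \<Rightarrow>
    (real \<Rightarrow> real^'n \<Rightarrow> real \<Rightarrow> real^'n \<Rightarrow> real) \<Rightarrow> bool" where
  "heat_kernel X m \<Gamma> \<longleftrightarrow>
     (\<lambda>(t,x,s,y). \<Gamma> t x s y) \<in> borel_measurable borel \<and>
     (\<forall>t x. \<forall>\<phi>::real \<times> (real^'n) \<Rightarrow> real. smooth_fun \<phi> \<and> bounded {z. \<phi> z \<noteq> 0} \<longrightarrow>
        integrable lborel (\<lambda>z. \<Gamma> t x (fst z) (snd z) * Hadj X m \<phi> z) \<and>
        integral\<^sup>L lborel (\<lambda>z. \<Gamma> t x (fst z) (snd z) * Hadj X m \<phi> z) = \<phi> (t, x)) \<and>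
     (\<forall>t x s y. 0 \<le> \<Gamma> t x s y) \<and>
     (\<forall>t x s y. s \<le> t \<longrightarrow> \<Gamma> t x s y = 0) \<and>
     (\<forall>t x y. \<Gamma> 0 y t x = \<Gamma> 0 x t y) \<and>
     (\<forall>t>0. \<forall>x. integrable lborel (\<lambda>y. \<Gamma> 0 y t x) \<and> integral\<^sup>L lborel (\<lambda>y. \<Gamma> 0 y t x) = 1) \<and>
     (\<forall>t>0. \<forall>s>0. \<forall>x y. integrable lborel (\<lambda>w. \<Gamma> 0 w t x * \<Gamma> 0 y s w) \<and>
        \<Gamma> 0 y (t + s) x = integral\<^sup>L lborel (\<lambda>w. \<Gamma> 0 w t x * \<Gamma> 0 y s w))"

end

theory Submission
  imports Defs
begin

(*
  Let a be the heat evolution of v0 at a point (t, x). Composing the supersolution inequality at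
  times tau < t with the heat semigroup (Chapman-Kolmogorov) shows that
    G(tau) = a + B * int_0^tau int Gamma(0,y;t-s,x) v(s,y)^alpha dy ds
  stays below int Gamma(0,y;t-tau,x) v(tau,y) dy. Jensen's inequality for the probability density
  Gamma(0,.;t-tau,x) then gives G(tau)^alpha <= G'(tau) / B, so G, which is finite up to time t,
  satisfies G' >= B G^alpha with G(0) = a. Such a function blows up before the time
  a^(1-alpha) / ((alpha-1) B); hence a <= ((alpha-1) B t)^(-1/(alpha-1)), which is the claim.
  The comparison with the ODE is done by telescoping G^(1-alpha) over a fine grid.
*)

lemma Bernoulli_inequality_powr:
  fixes y r :: real
  assumes y: "y > 0" and r: "r \<le> 0 \<or> r \<ge> 1"
  shows "1 + r * (y - 1) \<le> y powr r"
  using r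
proof
  assume r0: "r \<le> 0"
  have "1 + r * ln y \<le> exp (r * ln y)" by (rule exp_ge_add_one_self)
  moreover have "r * (y - 1) \<le> r * ln y"
    using ln_le_minus_one[OF y] r0 by (simp add: mult_left_mono_neg)
  ultimately have "1 + r * (y - 1) \<le> exp (r * ln y)" by linarith
  then show ?thesis using y by (simp add: powr_def)
next
  assume r1: "r \<ge> 1"
  have "(y powr r) powr (1/r) * 1 powr (1 - 1/r) \<le> (1/r) * y powr r + (1 - 1/r) * 1"
    using Youngs_inequality_0[of "1/r" "1 - 1/r" "y powr r" 1] r1 y by simp
  moreover have "(y powr r) powr (1/r) = y" using y r1 by (simp add: powr_powr)
  ultimately have "r * y \<le> r * ((1/r) * y powr r + (1 - 1/r))" using r1 by simp
  also have "\<dots> = y powr r + r - 1" using r1 by (simp add: algebra_simps)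
  finally show ?thesis by (simp add: algebra_simps)
qed

lemma powr_supporting_line:
  fixes u m \<alpha> :: real
  assumes u: "u \<ge> 0" and m: "m \<ge> 0" and \<alpha>: "\<alpha> > 1"
  shows "\<alpha> * m powr (\<alpha> - 1) * u \<le> u powr \<alpha> + (\<alpha> - 1) * m powr \<alpha>"
proof (cases "m = 0 \<or> u = 0")
  case True
  then show ?thesis using \<alpha> u m by auto
next
  case False
  then have m0: "m > 0" and u0: "u > 0" using u m by auto
  have "m powr \<alpha> * (1 + \<alpha> * (u/m - 1)) \<le> m powr \<alpha> * (u/m) powr \<alpha>"
    using Bernoulli_inequality_powr[of "u/m" \<alpha>] m0 u0 \<alpha> by (intro mult_left_mono) simp_all
  also have "m powr \<alpha> * (u/m) powr \<alpha> = u powr \<alpha>" using m0 u0 by (simp add: powr_divide)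
  also have "m powr \<alpha> * (1 + \<alpha> * (u/m - 1)) = m powr \<alpha> + \<alpha> * (m powr \<alpha> / m) * u - \<alpha> * m powr \<alpha>"
    using m0 by (simp add: field_simps)
  also have "m powr \<alpha> / m = m powr (\<alpha> - 1)" using m0 by (simp add: powr_diff)
  finally show ?thesis by (simp add: algebra_simps)
qed

lemma powr_one_minus_decrement:
  fixes a p q c \<alpha> :: real
  assumes a: "0 < a" "a \<le> p" "p \<le> q" and \<alpha>: "\<alpha> > 1" and c: "c \<ge> 0"
    and growth: "c * p powr \<alpha> \<le> q - p"
  shows "(\<alpha> - 1) * c * (1 - \<alpha> * (q - p) / a) \<le> p powr (1 - \<alpha>) - q powr (1 - \<alpha>)"
proof -
  define x where "x = p / q"
  have q: "q > 0" using a by linarith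
  have x: "0 < x" "x \<le> 1" and p: "p = x * q" using a q by (auto simp: x_def)
  have "1 - x \<le> (q - p) / a"
  proof -
    have "(1 - x) * a \<le> (1 - x) * q" using a x by (intro mult_left_mono) auto
    also have "\<dots> = q - p" by (simp add: p algebra_simps)
    finally show ?thesis using a by (simp add: pos_le_divide_eq)
  qed
  then have "1 - \<alpha> * (q - p) / a \<le> 1 + \<alpha> * (x - 1)"
    using \<alpha> mult_left_mono[of "1 - x" "(q - p) / a" \<alpha>] by (simp add: algebra_simps)
  then have "c * (1 - \<alpha> * (q - p) / a) \<le> c * (1 + \<alpha> * (x - 1))"
    using c by (rule mult_left_mono)
  also have "\<dots> \<le> c * x powr \<alpha>"
    using Bernoulli_inequality_powr[of x \<alpha>] x \<alpha> c by (intro mult_left_mono) auto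
  also have "\<dots> = c * p powr \<alpha> / q powr \<alpha>"
    using a q by (simp add: x_def powr_divide)
  also have "\<dots> \<le> (q - p) / q powr \<alpha>"
    using growth q by (intro divide_right_mono) auto
  also have "\<dots> = (1 - x) * q powr (1 - \<alpha>)"
    using q by (simp add: p powr_diff algebra_simps)
  finally have "(\<alpha> - 1) * c * (1 - \<alpha> * (q - p) / a) \<le> (\<alpha> - 1) * ((1 - x) * q powr (1 - \<alpha>))"
    using \<alpha> by (simp add: mult.assoc)
  also have "\<dots> = ((\<alpha> - 1) * (1 - x)) * q powr (1 - \<alpha>)" by (simp only: mult.assoc)
  also have "\<dots> \<le> (x powr (1 - \<alpha>) - 1) * q powr (1 - \<alpha>)"
    using Bernoulli_inequality_powr[of x "1 - \<alpha>"] x \<alpha>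
    by (intro mult_right_mono) (auto simp: algebra_simps)
  also have "\<dots> = p powr (1 - \<alpha>) - q powr (1 - \<alpha>)"
    using x q by (simp add: p powr_mult algebra_simps)
  finally show ?thesis .
qed

lemma powr_one_minus_telescope:
  fixes g :: "nat \<Rightarrow> real" and a c \<alpha> :: real
  assumes a: "0 < a" and \<alpha>: "\<alpha> > 1" and c: "c \<ge> 0"
    and steps: "\<And>k. k < N \<Longrightarrow> a \<le> g k \<and> g k \<le> g (Suc k) \<and> c * g k powr \<alpha> \<le> g (Suc k) - g k"
  shows "(\<alpha> - 1) * c * (real N - \<alpha> / a * (g N - g 0)) \<le> g 0 powr (1 - \<alpha>) - g N powr (1 - \<alpha>)"
proof -
  have "(\<Sum>k<N. 1 - \<alpha> * (g (Suc k) - g k) / a) = real N - (\<Sum>k<N. \<alpha> * (g (Suc k) - g k) / a)"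
    by (simp only: sum_subtractf) simp
  also have "(\<Sum>k<N. \<alpha> * (g (Suc k) - g k) / a) = \<alpha> / a * (\<Sum>k<N. g (Suc k) - g k)"
    by (simp add: sum_distrib_left)
  finally have "(\<Sum>k<N. 1 - \<alpha> * (g (Suc k) - g k) / a) = real N - \<alpha> / a * (g N - g 0)"
    by (simp only: sum_lessThan_telescope)
  then have "(\<alpha> - 1) * c * (real N - \<alpha> / a * (g N - g 0))
      = (\<alpha> - 1) * c * (\<Sum>k<N. 1 - \<alpha> * (g (Suc k) - g k) / a)"
    by simp
  also have "\<dots> = (\<Sum>k<N. (\<alpha> - 1) * c * (1 - \<alpha> * (g (Suc k) - g k) / a))"
    by (rule sum_distrib_left)
  also have "\<dots> \<le> (\<Sum>k<N. g k powr (1 - \<alpha>) - g (Suc k) powr (1 - \<alpha>))"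
    using steps a \<alpha> c by (intro sum_mono powr_one_minus_decrement) auto
  also have "\<dots> = g 0 powr (1 - \<alpha>) - g N powr (1 - \<alpha>)"
    by (rule sum_lessThan_telescope')
  finally show ?thesis .
qed

lemma superlinear_growth_grid_bound:
  fixes G :: "real \<Rightarrow> real" and B t \<alpha> :: real and N :: nat
  assumes \<alpha>: "\<alpha> > 1" and B: "B > 0" and t: "t > 0" and a: "G 0 > 0" and N: "N \<ge> 1"
    and growth: "\<And>r s. 0 \<le> r \<Longrightarrow> r \<le> s \<Longrightarrow> s \<le> t \<Longrightarrow> B * (s - r) * G r powr \<alpha> \<le> G s - G r"
  shows "(\<alpha> - 1) * B * t - (\<alpha> - 1) * B * \<alpha> * t * (G t - G 0) / (G 0 * real N) \<le> G 0 powr (1 - \<alpha>)"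
proof -
  have mono: "G r \<le> G s" if "0 \<le> r" "r \<le> s" "s \<le> t" for r s
  proof -
    have "0 \<le> B * (s - r) * G r powr \<alpha>" using B that by simp
    then show ?thesis using growth[OF that] by linarith
  qed
  define d where "d = t / real N"
  have d: "0 \<le> d" using t by (simp add: d_def)
  have grid: "0 \<le> real k * d" "real k * d \<le> t" if "k \<le> N" for k
    using that N t by (auto simp: d_def field_simps)
  have "(\<alpha> - 1) * (B * d) * (real N - \<alpha> / G 0 * (G (real N * d) - G (real 0 * d)))
      \<le> G (real 0 * d) powr (1 - \<alpha>) - G (real N * d) powr (1 - \<alpha>)"
  proof (rule powr_one_minus_telescope[OF a \<alpha>])
    show "0 \<le> B * d" using B d by simp
    fix k assume k: "k < N"
    have kd: "real k * d \<le> real (Suc k) * d" using d by (intro mult_right_mono) auto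
    have "B * (real (Suc k) * d - real k * d) * G (real k * d) powr \<alpha>
        \<le> G (real (Suc k) * d) - G (real k * d)"
      using grid[of k] grid[of "Suc k"] k kd by (intro growth) auto
    moreover have "G (real k * d) \<le> G (real (Suc k) * d)"
      using grid[of k] grid[of "Suc k"] k kd by (intro mono) auto
    moreover have "G 0 \<le> G (real k * d)" using grid[of k] k by (intro mono) auto
    ultimately show "G 0 \<le> G (real k * d) \<and> G (real k * d) \<le> G (real (Suc k) * d) \<and>
        B * d * G (real k * d) powr \<alpha> \<le> G (real (Suc k) * d) - G (real k * d)"
      by (simp add: algebra_simps)
  qed
  moreover have "real N * d = t" using N by (simp add: d_def)
  moreover have "(\<alpha> - 1) * (B * d) * (real N - \<alpha> / G 0 * (G t - G 0))
      = (\<alpha> - 1) * B * t - (\<alpha> - 1) * B * \<alpha> * t * (G t - G 0) / (G 0 * real N)"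
    using N a by (simp add: d_def field_simps)
  ultimately have "(\<alpha> - 1) * B * t - (\<alpha> - 1) * B * \<alpha> * t * (G t - G 0) / (G 0 * real N)
      \<le> G 0 powr (1 - \<alpha>) - G t powr (1 - \<alpha>)"
    by simp
  then show ?thesis using powr_ge_zero[of "G t" "1 - \<alpha>"] by linarith
qed

lemma superlinear_growth_time_bound:
  fixes G :: "real \<Rightarrow> real" and B t \<alpha> :: real
  assumes \<alpha>: "\<alpha> > 1" and B: "B > 0" and t: "t > 0" and G0: "G 0 \<ge> 0"
    and growth: "\<And>r s. 0 \<le> r \<Longrightarrow> r \<le> s \<Longrightarrow> s \<le> t \<Longrightarrow> B * (s - r) * G r powr \<alpha> \<le> G s - G r"
  shows "G 0 \<le> ((\<alpha> - 1) * B * t) powr (-1 / (\<alpha> - 1))"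
proof (cases "G 0 = 0")
  case False
  define a where "a = G 0"
  have a: "a > 0" using G0 False by (simp add: a_def)
  define C where "C = (\<alpha> - 1) * B * \<alpha> * t * (G t - a) / a"
  have "(\<alpha> - 1) * B * t - C / real N \<le> a powr (1 - \<alpha>)" if "N \<ge> 1" for N
    using superlinear_growth_grid_bound[OF \<alpha> B t _ that growth] a by (simp add: a_def C_def)
  then have "(\<alpha> - 1) * B * t \<le> a powr (1 - \<alpha>)"
    by (intro LIMSEQ_le_const2[of "\<lambda>N. (\<alpha> - 1) * B * t - C / real N"])
       (auto intro!: tendsto_eq_intros lim_const_over_n)
  then have "(a powr (1 - \<alpha>)) powr (-1 / (\<alpha> - 1)) \<le> ((\<alpha> - 1) * B * t) powr (-1 / (\<alpha> - 1))"
    using \<alpha> B t by (intro powr_mono2') auto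
  moreover have "(1 - \<alpha>) * (-1 / (\<alpha> - 1)) = 1" using \<alpha> by (simp add: field_simps)
  then have "(a powr (1 - \<alpha>)) powr (-1 / (\<alpha> - 1)) = a"
    using a by (simp add: powr_powr)
  ultimately show ?thesis by (simp add: a_def)
qed simp

lemma powr_blowup_scaling:
  fixes t B \<alpha> :: real
  assumes "t > 0" "B > 0" "\<alpha> > 1"
  shows "t powr (1 / (\<alpha> - 1)) * ((\<alpha> - 1) * B * t) powr (-1 / (\<alpha> - 1)) = (B * (\<alpha> - 1)) powr (-1 / (\<alpha> - 1))"
proof -
  have "((\<alpha> - 1) * B * t) powr (-1 / (\<alpha> - 1)) = (B * (\<alpha> - 1)) powr (-1 / (\<alpha> - 1)) * t powr (-1 / (\<alpha> - 1))"
    using assms by (simp add: powr_mult mult_ac)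
  moreover have "t powr (1 / (\<alpha> - 1)) * t powr (-1 / (\<alpha> - 1)) = 1"
    using assms by (simp add: powr_add[symmetric])
  ultimately show ?thesis by (simp add: mult_ac)
qed

lemma nn_integral_superlinear_increment:
  fixes h G :: "real \<Rightarrow> ennreal" and a :: ennreal and B t \<alpha> :: real
  assumes h[measurable]: "h \<in> borel_measurable lborel"
    and G_eq: "\<And>\<tau>. G \<tau> = a + ennreal B * (\<integral>\<^sup>+s. indicator {0..\<tau>} s * h s \<partial>lborel)"
    and \<alpha>: "\<alpha> \<ge> 0" and B: "B \<ge> 0" and G_fin: "G t < \<infinity>"
    and super: "AE \<sigma> in lborel. 0 < \<sigma> \<longrightarrow> \<sigma> < t \<longrightarrow> ennreal (enn2real (G \<sigma>) powr \<alpha>) \<le> h \<sigma>"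
    and rs: "0 \<le> r" "r \<le> s" "s \<le> t"
  shows "G r + ennreal (B * (s - r) * enn2real (G r) powr \<alpha>) \<le> G s"
proof -
  have mono: "G r' \<le> G s'" if "r' \<le> s'" for r' s'
    unfolding G_eq using that
    by (intro add_left_mono mult_left_mono nn_integral_mono) (auto split: split_indicator)
  define c where "c = enn2real (G r) powr \<alpha>"
  have "ennreal c * ennreal (s - r) = (\<integral>\<^sup>+\<sigma>. ennreal c * indicator {r<..s} \<sigma> \<partial>lborel)"
    using rs by (simp add: nn_integral_cmult_indicator)
  also have "\<dots> \<le> (\<integral>\<^sup>+\<sigma>. indicator {r<..s} \<sigma> * h \<sigma> \<partial>lborel)"
    using super AE_lborel_singleton[of t]
  proof (intro nn_integral_mono_AE, eventually_elim)
    case (elim \<sigma>)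
    show ?case
    proof (cases "\<sigma> \<in> {r<..s}")
      case True
      then have \<sigma>: "0 < \<sigma>" "\<sigma> < t" using rs elim by auto
      have "enn2real (G r) \<le> enn2real (G \<sigma>)"
        using mono[of r \<sigma>] mono[of \<sigma> t] G_fin True \<sigma> by (intro enn2real_mono) auto
      then have "c \<le> enn2real (G \<sigma>) powr \<alpha>" unfolding c_def using \<alpha> by (intro powr_mono2) auto
      then have "ennreal c \<le> h \<sigma>" using elim \<sigma> by (meson ennreal_leI order_trans)
      then show ?thesis using True by simp
    qed simp
  qed
  finally have c_le: "ennreal c * ennreal (s - r) \<le> (\<integral>\<^sup>+\<sigma>. indicator {r<..s} \<sigma> * h \<sigma> \<partial>lborel)" .
  have "(\<integral>\<^sup>+\<sigma>. indicator {0..s} \<sigma> * h \<sigma> \<partial>lborel)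
      = (\<integral>\<^sup>+\<sigma>. indicator {0..r} \<sigma> * h \<sigma> + indicator {r<..s} \<sigma> * h \<sigma> \<partial>lborel)"
    using rs by (intro nn_integral_cong) (auto split: split_indicator)
  also have "\<dots> = (\<integral>\<^sup>+\<sigma>. indicator {0..r} \<sigma> * h \<sigma> \<partial>lborel) + (\<integral>\<^sup>+\<sigma>. indicator {r<..s} \<sigma> * h \<sigma> \<partial>lborel)"
    by (rule nn_integral_add) measurable
  finally have split: "G s = G r + ennreal B * (\<integral>\<^sup>+\<sigma>. indicator {r<..s} \<sigma> * h \<sigma> \<partial>lborel)"
    unfolding G_eq by (simp add: distrib_left add.assoc)
  have "ennreal (B * (s - r) * c) = ennreal B * (ennreal c * ennreal (s - r))"
    using B rs by (simp add: c_def ennreal_mult mult_ac)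
  with c_le split show ?thesis
    by (simp add: c_def) (metis add_left_mono mult_left_mono zero_le)
qed

lemma nn_integral_superlinear_time_bound:
  fixes h G :: "real \<Rightarrow> ennreal" and a :: ennreal and B t \<alpha> :: real
  assumes h: "h \<in> borel_measurable lborel"
    and G_eq: "\<And>\<tau>. G \<tau> = a + ennreal B * (\<integral>\<^sup>+s. indicator {0..\<tau>} s * h s \<partial>lborel)"
    and \<alpha>: "\<alpha> > 1" and B: "B > 0" and t: "t > 0" and G_fin: "G t < \<infinity>"
    and super: "AE \<sigma> in lborel. 0 < \<sigma> \<longrightarrow> \<sigma> < t \<longrightarrow> ennreal (enn2real (G \<sigma>) powr \<alpha>) \<le> h \<sigma>"
  shows "a \<le> ennreal (((\<alpha> - 1) * B * t) powr (-1 / (\<alpha> - 1)))"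
proof -
  have fin: "G \<tau> < \<infinity>" if "\<tau> \<le> t" for \<tau>
  proof -
    have "G \<tau> \<le> G t" unfolding G_eq using that
      by (intro add_left_mono mult_left_mono nn_integral_mono) (auto split: split_indicator)
    then show ?thesis using G_fin by (rule le_less_trans)
  qed
  define g where "g \<tau> = enn2real (G \<tau>)" for \<tau>
  have g0: "g 0 \<le> ((\<alpha> - 1) * B * t) powr (-1 / (\<alpha> - 1))"
  proof (rule superlinear_growth_time_bound[OF \<alpha> B t])
    show "0 \<le> g 0" by (simp add: g_def)
    fix r s assume rs: "0 \<le> r" "r \<le> s" "s \<le> t"
    have "g r + B * (s - r) * g r powr \<alpha> = enn2real (G r + ennreal (B * (s - r) * g r powr \<alpha>))"
      using fin[of r] rs B by (simp add: g_def enn2real_plus)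
    also have "\<dots> \<le> g s"
      unfolding g_def using nn_integral_superlinear_increment[OF h G_eq _ _ G_fin super rs] \<alpha> B fin[of s] rs
      by (intro enn2real_mono) auto
    finally show "B * (s - r) * g r powr \<alpha> \<le> g s - g r" by simp
  qed
  have "(\<integral>\<^sup>+s. indicator {0..0} s * h s \<partial>lborel) = (\<integral>\<^sup>+s. h s * indicator {0} s \<partial>lborel)"
    by (simp add: mult.commute)
  then have "a = ennreal (g 0)" using fin[of 0] t by (simp add: G_eq g_def)
  also have "\<dots> \<le> ennreal (((\<alpha> - 1) * B * t) powr (-1 / (\<alpha> - 1)))"
    using g0 by (rule ennreal_leI)
  finally show ?thesis .
qed

lemma le_one_plus_powr:
  fixes u \<alpha> :: real
  assumes "u \<ge> 0" "\<alpha> \<ge> 1"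
  shows "u \<le> 1 + u powr \<alpha>"
proof (cases "u \<le> 1")
  case True
  then show ?thesis using powr_ge_zero[of u \<alpha>] by linarith
next
  case False
  then have "u powr 1 \<le> u powr \<alpha>" using assms by (intro powr_mono) auto
  then show ?thesis using False by simp
qed

lemma nn_integral_finite_if_powr_finite:
  fixes K g :: "'a \<Rightarrow> real"
  assumes [measurable]: "K \<in> borel_measurable M" "g \<in> borel_measurable M"
    and K: "\<And>z. 0 \<le> K z" "(\<integral>\<^sup>+z. ennreal (K z) \<partial>M) = 1"
    and g: "\<And>z. 0 \<le> g z" and \<alpha>: "\<alpha> \<ge> 1"
    and fin: "(\<integral>\<^sup>+z. ennreal (K z * g z powr \<alpha>) \<partial>M) < \<infinity>"
  shows "(\<integral>\<^sup>+z. ennreal (K z * g z) \<partial>M) < \<infinity>"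
proof -
  have "(\<integral>\<^sup>+z. ennreal (K z * g z) \<partial>M) \<le> (\<integral>\<^sup>+z. ennreal (K z) + ennreal (K z * g z powr \<alpha>) \<partial>M)"
  proof (intro nn_integral_mono)
    fix z
    have "K z * g z \<le> K z * (1 + g z powr \<alpha>)"
      using le_one_plus_powr[of "g z" \<alpha>] g K \<alpha> by (intro mult_left_mono) auto
    then show "ennreal (K z * g z) \<le> ennreal (K z) + ennreal (K z * g z powr \<alpha>)"
      using K(1)[of z] by (simp add: ennreal_plus[symmetric] distrib_left del: ennreal_plus)
  qed
  also have "\<dots> = 1 + (\<integral>\<^sup>+z. ennreal (K z * g z powr \<alpha>) \<partial>M)"
    using K(2) by (subst nn_integral_add) auto
  also have "\<dots> < \<infinity>" using fin by (simp add: less_top)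
  finally show ?thesis .
qed

lemma nn_integral_powr_Jensen:
  fixes K g :: "'a \<Rightarrow> real"
  assumes [measurable]: "K \<in> borel_measurable M" "g \<in> borel_measurable M"
    and K: "\<And>z. 0 \<le> K z" "(\<integral>\<^sup>+z. ennreal (K z) \<partial>M) = 1"
    and g: "\<And>z. 0 \<le> g z" and \<alpha>: "\<alpha> > 1"
    and fin: "(\<integral>\<^sup>+z. ennreal (K z * g z powr \<alpha>) \<partial>M) < \<infinity>"
  shows "enn2real (\<integral>\<^sup>+z. ennreal (K z * g z) \<partial>M) powr \<alpha> \<le> enn2real (\<integral>\<^sup>+z. ennreal (K z * g z powr \<alpha>) \<partial>M)"
proof -
  define m where "m = enn2real (\<integral>\<^sup>+z. ennreal (K z * g z) \<partial>M)"
  define i where "i = enn2real (\<integral>\<^sup>+z. ennreal (K z * g z powr \<alpha>) \<partial>M)"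
  have m: "(\<integral>\<^sup>+z. ennreal (K z * g z) \<partial>M) = ennreal m" "0 \<le> m"
    using nn_integral_finite_if_powr_finite[of K M g \<alpha>] assms by (simp_all add: m_def)
  have i: "(\<integral>\<^sup>+z. ennreal (K z * g z powr \<alpha>) \<partial>M) = ennreal i"
    using fin by (simp add: i_def)
  define c where "c = \<alpha> * m powr (\<alpha> - 1)"
  have c: "0 \<le> c" using \<alpha> by (simp add: c_def)
  \<comment> \<open>Integrate the supporting line of u powr \<alpha> at u = m against the probability density K.\<close>
  have "ennreal (c * m) = ennreal c * (\<integral>\<^sup>+z. ennreal (K z * g z) \<partial>M)"
    using c m by (simp add: ennreal_mult)
  also have "\<dots> = (\<integral>\<^sup>+z. ennreal c * ennreal (K z * g z) \<partial>M)"
    by (rule nn_integral_cmult[symmetric]) measurable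
  also have "\<dots> = (\<integral>\<^sup>+z. ennreal (K z * (c * g z)) \<partial>M)"
    using c by (simp add: ennreal_mult'[symmetric] mult_ac)
  also have "\<dots> \<le> (\<integral>\<^sup>+z. ennreal (K z * g z powr \<alpha>) + ennreal ((\<alpha> - 1) * m powr \<alpha>) * ennreal (K z) \<partial>M)"
  proof (intro nn_integral_mono)
    fix z
    have "K z * (c * g z) \<le> K z * (g z powr \<alpha> + (\<alpha> - 1) * m powr \<alpha>)"
      using powr_supporting_line[of "g z" m \<alpha>] g m \<alpha> K by (intro mult_left_mono) (auto simp: c_def)
    then show "ennreal (K z * (c * g z)) \<le> ennreal (K z * g z powr \<alpha>) + ennreal ((\<alpha> - 1) * m powr \<alpha>) * ennreal (K z)"
      using \<alpha> K(1)[of z] by (simp add: ennreal_mult[symmetric] ennreal_plus[symmetric] distrib_left mult_ac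
          del: ennreal_plus)
  qed
  also have "\<dots> = ennreal (i + (\<alpha> - 1) * m powr \<alpha>)"
    using K \<alpha> i by (subst nn_integral_add) (auto simp: nn_integral_cmult i_def ennreal_plus)
  finally have "c * m \<le> i + (\<alpha> - 1) * m powr \<alpha>"
    using \<alpha> by (subst (asm) ennreal_le_iff) (auto simp: i_def)
  moreover have "c * m = \<alpha> * m powr \<alpha>"
    using m(2) by (cases "m = 0") (auto simp: c_def powr_diff)
  ultimately show ?thesis by (simp add: m_def i_def algebra_simps)
qed

lemma completion_borel_minorant:
  fixes f :: "'a \<Rightarrow> ennreal"
  assumes "f \<in> borel_measurable (completion M)"
  obtains g :: "'a \<Rightarrow> real" where "g \<in> borel_measurable M" "\<And>x. 0 \<le> g x"
    "\<And>x. g x \<le> enn2real (f x)" "AE x in M. g x = enn2real (f x)"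
proof -
  obtain g' where g'[measurable]: "g' \<in> borel_measurable M" and "AE x in M. f x = g' x"
    using completion_ex_borel_measurable[OF assms] by blast
  then obtain N where N: "{x \<in> space M. f x \<noteq> g' x} \<subseteq> N" "N \<in> null_sets M"
    by (auto elim!: AE_E)
  \<comment> \<open>Redefine g' as 0 on the null set N, where it may exceed f.\<close>
  define g where "g x = indicator (space M - N) x * enn2real (g' x)" for x
  show thesis
  proof
    have [measurable]: "space M - N \<in> sets M" using N by auto
    show "g \<in> borel_measurable M" unfolding g_def by measurable
    show "0 \<le> g x" for x by (simp add: g_def)
    show "g x \<le> enn2real (f x)" for x using N by (auto simp: g_def split: split_indicator)
    show "AE x in M. g x = enn2real (f x)"
      using N by (intro AE_I'[of N]) (auto simp: g_def)
  qed
qed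

lemma restrict_space_completion_borel_minorant:
  fixes f :: "'a \<Rightarrow> ennreal"
  assumes f: "f \<in> borel_measurable (restrict_space (completion M) \<Omega>)" and \<Omega>: "\<Omega> \<in> sets M"
  obtains g :: "'a \<Rightarrow> real" where "g \<in> borel_measurable M" "\<And>x. 0 \<le> g x"
    "\<And>x. x \<in> \<Omega> \<Longrightarrow> g x \<le> enn2real (f x)" "AE x in M. x \<in> \<Omega> \<longrightarrow> g x = enn2real (f x)"
proof -
  have "(\<lambda>x. if x \<in> \<Omega> then f x else 0) \<in> borel_measurable (completion M)"
    using f \<Omega> measurable_restrict_space_iff[of \<Omega> "completion M" 0 borel f] by simp
  then obtain g :: "'a \<Rightarrow> real" where g: "g \<in> borel_measurable M" "\<And>x. 0 \<le> g x"
    "\<And>x. g x \<le> enn2real (if x \<in> \<Omega> then f x else 0)"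
    "AE x in M. g x = enn2real (if x \<in> \<Omega> then f x else 0)"
    using completion_borel_minorant by blast
  show thesis
  proof (rule that[OF g(1,2)])
    show "g x \<le> enn2real (f x)" if "x \<in> \<Omega>" for x using g(3)[of x] that by simp
    show "AE x in M. x \<in> \<Omega> \<longrightarrow> g x = enn2real (f x)" using g(4) by eventually_elim simp
  qed
qed

locale heat_semigroup =
  fixes \<Gamma> :: "real \<Rightarrow> 'a::euclidean_space \<Rightarrow> real \<Rightarrow> 'a \<Rightarrow> real"
  assumes Gamma_measurable: "(\<lambda>(t, x, s, y). \<Gamma> t x s y) \<in> borel_measurable borel"
    and Gamma_nonneg: "\<And>t x s y. 0 \<le> \<Gamma> t x s y"
    and Gamma_mass: "\<And>t x. t > 0 \<Longrightarrow>
      integrable lborel (\<lambda>y. \<Gamma> 0 y t x) \<and> integral\<^sup>L lborel (\<lambda>y. \<Gamma> 0 y t x) = 1"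
    and Gamma_Chapman_Kolmogorov: "\<And>t s x y. t > 0 \<Longrightarrow> s > 0 \<Longrightarrow>
      integrable lborel (\<lambda>w. \<Gamma> 0 w t x * \<Gamma> 0 y s w) \<and>
      \<Gamma> 0 y (t + s) x = integral\<^sup>L lborel (\<lambda>w. \<Gamma> 0 w t x * \<Gamma> 0 y s w)"
begin

lemma measurable_Gamma[measurable (raw)]:
  assumes "a \<in> borel_measurable M" "b \<in> borel_measurable M" "c \<in> borel_measurable M"
    "d \<in> borel_measurable M"
  shows "(\<lambda>\<omega>. \<Gamma> (a \<omega>) (b \<omega>) (c \<omega>) (d \<omega>)) \<in> borel_measurable M"
  using measurable_compose[of "\<lambda>\<omega>. (a \<omega>, b \<omega>, c \<omega>, d \<omega>)" M borel, OF _ Gamma_measurable] assms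
  by simp

lemma nn_integral_Gamma: "t > 0 \<Longrightarrow> (\<integral>\<^sup>+y. ennreal (\<Gamma> 0 y t x) \<partial>lborel) = 1"
  using Gamma_mass[of t x] Gamma_nonneg by (subst nn_integral_eq_integral) auto

lemma nn_integral_Gamma_Chapman_Kolmogorov:
  "t > 0 \<Longrightarrow> s > 0 \<Longrightarrow>
    (\<integral>\<^sup>+w. ennreal (\<Gamma> 0 w t x) * ennreal (\<Gamma> 0 y s w) \<partial>lborel) = ennreal (\<Gamma> 0 y (t + s) x)"
  using Gamma_Chapman_Kolmogorov[of t s x y] Gamma_nonneg
  by (subst ennreal_mult[symmetric]) (auto simp: nn_integral_eq_integral)

definition heat :: "('a \<Rightarrow> real) \<Rightarrow> real \<Rightarrow> 'a \<Rightarrow> ennreal" where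
  "heat w t x = (\<integral>\<^sup>+y. ennreal (\<Gamma> 0 y t x * w y) \<partial>lborel)"

definition duhamel :: "('a \<Rightarrow> real) \<Rightarrow> (real \<Rightarrow> 'a \<Rightarrow> real) \<Rightarrow> real \<Rightarrow> 'a \<Rightarrow> ennreal" where
  "duhamel w F t x = heat w t x + (\<integral>\<^sup>+s. indicator {0..t} s * heat (F s) (t - s) x \<partial>lborel)"

lemma heat_eq_nn_integral_mult:
  "heat w t x = (\<integral>\<^sup>+y. ennreal (\<Gamma> 0 y t x) * ennreal (w y) \<partial>lborel)"
  unfolding heat_def using Gamma_nonneg by (simp add: ennreal_mult')

lemma heat_cmult:
  assumes [measurable]: "w \<in> borel_measurable lborel" and "0 \<le> c"
  shows "heat (\<lambda>y. c * w y) t x = ennreal c * heat w t x"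
  unfolding heat_eq_nn_integral_mult using \<open>0 \<le> c\<close>
  by (simp add: ennreal_mult' mult.left_commute nn_integral_cmult)

lemma heat_heat:
  assumes [measurable]: "w \<in> borel_measurable lborel" and "0 < s" "0 < t"
  shows "(\<integral>\<^sup>+y. ennreal (\<Gamma> 0 y s x) * heat w t y \<partial>lborel) = heat w (s + t) x"
proof -
  have "(\<integral>\<^sup>+y. ennreal (\<Gamma> 0 y s x) * heat w t y \<partial>lborel)
      = (\<integral>\<^sup>+y. (\<integral>\<^sup>+z. ennreal (\<Gamma> 0 y s x) * ennreal (\<Gamma> 0 z t y) * ennreal (w z) \<partial>lborel) \<partial>lborel)"
    unfolding heat_eq_nn_integral_mult
    by (intro nn_integral_cong) (simp add: nn_integral_cmult[symmetric] mult.assoc)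
  also have "\<dots> = (\<integral>\<^sup>+z. (\<integral>\<^sup>+y. ennreal (\<Gamma> 0 y s x) * ennreal (\<Gamma> 0 z t y) * ennreal (w z) \<partial>lborel) \<partial>lborel)"
    by (rule lborel_pair.Fubini'[symmetric]) measurable
  also have "\<dots> = (\<integral>\<^sup>+z. (\<integral>\<^sup>+y. ennreal (\<Gamma> 0 y s x) * ennreal (\<Gamma> 0 z t y) \<partial>lborel) * ennreal (w z) \<partial>lborel)"
    by (intro nn_integral_cong) (simp add: nn_integral_multc)
  also have "\<dots> = heat w (s + t) x"
    using assms by (simp add: nn_integral_Gamma_Chapman_Kolmogorov heat_eq_nn_integral_mult)
  finally show ?thesis .
qed

lemma heat_duhamel:
  assumes [measurable]: "w \<in> borel_measurable lborel" "case_prod F \<in> borel_measurable (lborel \<Otimes>\<^sub>M lborel)"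
    and \<tau>: "0 < \<tau>" "\<tau> < t"
  shows "(\<integral>\<^sup>+y. ennreal (\<Gamma> 0 y (t - \<tau>) x) * duhamel w F \<tau> y \<partial>lborel)
    = heat w t x + (\<integral>\<^sup>+s. indicator {0..\<tau>} s * heat (F s) (t - s) x \<partial>lborel)"
proof -
  let ?k = "\<lambda>y. ennreal (\<Gamma> 0 y (t - \<tau>) x)"
  have "(\<integral>\<^sup>+y. ?k y * duhamel w F \<tau> y \<partial>lborel)
      = (\<integral>\<^sup>+y. ?k y * heat w \<tau> y \<partial>lborel)
      + (\<integral>\<^sup>+y. ?k y * (\<integral>\<^sup>+s. indicator {0..\<tau>} s * heat (F s) (\<tau> - s) y \<partial>lborel) \<partial>lborel)"
    unfolding duhamel_def distrib_left by (rule nn_integral_add) (unfold heat_def, measurable)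
  also have "(\<integral>\<^sup>+y. ?k y * heat w \<tau> y \<partial>lborel) = heat w t x"
    using heat_heat[of w "t - \<tau>" \<tau> x] \<tau> by simp
  also have "(\<integral>\<^sup>+y. ?k y * (\<integral>\<^sup>+s. indicator {0..\<tau>} s * heat (F s) (\<tau> - s) y \<partial>lborel) \<partial>lborel)
      = (\<integral>\<^sup>+s. (\<integral>\<^sup>+y. ?k y * (indicator {0..\<tau>} s * heat (F s) (\<tau> - s) y) \<partial>lborel) \<partial>lborel)"
    by (subst lborel_pair.Fubini') (simp_all add: nn_integral_cmult[symmetric] heat_def)
  also have "\<dots> = (\<integral>\<^sup>+s. indicator {0..\<tau>} s * heat (F s) (t - s) x \<partial>lborel)"
  proof (intro nn_integral_cong_AE eventually_mono[OF AE_lborel_singleton[of \<tau>]])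
    fix s :: real
    assume "s \<noteq> \<tau>"
    then have "s \<in> {0..\<tau>} \<Longrightarrow> 0 < \<tau> - s" by auto
    then show "(\<integral>\<^sup>+y. ?k y * (indicator {0..\<tau>} s * heat (F s) (\<tau> - s) y) \<partial>lborel)
        = indicator {0..\<tau>} s * heat (F s) (t - s) x"
      using heat_heat[of "F s" "t - \<tau>" "\<tau> - s" x] \<tau> by (auto split: split_indicator)
  qed
  finally show ?thesis .
qed

lemma heat_mono: "(\<And>y. w y \<le> w' y) \<Longrightarrow> heat w t x \<le> heat w' t x"
  unfolding heat_def using Gamma_nonneg by (intro nn_integral_mono ennreal_leI mult_left_mono) auto

lemma duhamel_mono:
  assumes "\<And>y. w y \<le> w' y" and "\<And>s y. s \<in> {0..t} \<Longrightarrow> F s y \<le> F' s y"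
  shows "duhamel w F t x \<le> duhamel w' F' t x"
  unfolding duhamel_def using assms
  by (intro add_mono heat_mono nn_integral_mono) (auto intro: heat_mono split: split_indicator)

lemma heat_powr_Jensen:
  assumes [measurable]: "g \<in> borel_measurable lborel"
    and g: "\<And>y. 0 \<le> g y" and \<alpha>: "\<alpha> > 1" and t: "t > 0" and c: "c \<le> heat g t x"
  shows "ennreal (enn2real c powr \<alpha>) \<le> heat (\<lambda>y. g y powr \<alpha>) t x"
proof (cases "heat (\<lambda>y. g y powr \<alpha>) t x < \<infinity>")
  case True
  note fin = True[unfolded heat_def]
  have K: "(\<lambda>y. \<Gamma> 0 y t x) \<in> borel_measurable lborel" by measurable
  note K_density = K assms(1) Gamma_nonneg nn_integral_Gamma[OF t] g
  have "heat g t x < \<infinity>"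
    unfolding heat_def using \<alpha> by (intro nn_integral_finite_if_powr_finite[OF K_density _ fin]) simp
  then have "enn2real c powr \<alpha> \<le> enn2real (heat g t x) powr \<alpha>"
    using c \<alpha> by (intro powr_mono2 enn2real_mono) auto
  also have "\<dots> \<le> enn2real (heat (\<lambda>y. g y powr \<alpha>) t x)"
    unfolding heat_def by (rule nn_integral_powr_Jensen[OF K_density \<alpha> fin])
  finally have "ennreal (enn2real c powr \<alpha>) \<le> ennreal (enn2real (heat (\<lambda>y. g y powr \<alpha>) t x))"
    by (rule ennreal_leI)
  moreover have "ennreal (enn2real (heat (\<lambda>y. g y powr \<alpha>) t x)) = heat (\<lambda>y. g y powr \<alpha>) t x"
    using True by simp
  ultimately show ?thesis by simp
qed (simp add: less_top[symmetric])

lemma heat_supersolution_bound: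
  fixes w :: "'a \<Rightarrow> real" and V :: "real \<times> 'a \<Rightarrow> real" and B t \<alpha> :: real
  assumes [measurable]: "w \<in> borel_measurable lborel" "V \<in> borel_measurable (lborel \<Otimes>\<^sub>M lborel)"
    and V: "\<And>z. 0 \<le> V z" and \<alpha>: "\<alpha> > 1" and B: "B > 0" and t: "t > 0"
    and super: "AE \<tau> in lborel. 0 < \<tau> \<longrightarrow> \<tau> < t \<longrightarrow>
      (AE y in lborel. duhamel w (\<lambda>s z. B * V (s, z) powr \<alpha>) \<tau> y \<le> ennreal (V (\<tau>, y)))"
    and fin: "duhamel w (\<lambda>s z. B * V (s, z) powr \<alpha>) t x < \<infinity>"
  shows "heat w t x \<le> ennreal (((\<alpha> - 1) * B * t) powr (-1 / (\<alpha> - 1)))"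
proof -
  let ?F = "\<lambda>s z. B * V (s, z) powr \<alpha>"
  define W\<alpha> where "W\<alpha> s = heat (\<lambda>z. V (s, z) powr \<alpha>) (t - s) x" for s
  define G where "G \<tau> = heat w t x + ennreal B * (\<integral>\<^sup>+s. indicator {0..\<tau>} s * W\<alpha> s \<partial>lborel)" for \<tau>
  have [measurable]: "W\<alpha> \<in> borel_measurable lborel"
    unfolding W\<alpha>_def heat_def by measurable
  have G_eq: "G \<tau> = heat w t x + (\<integral>\<^sup>+s. indicator {0..\<tau>} s * heat (?F s) (t - s) x \<partial>lborel)" for \<tau>
  proof -
    have "ennreal B * (\<integral>\<^sup>+s. indicator {0..\<tau>} s * W\<alpha> s \<partial>lborel)
        = (\<integral>\<^sup>+s. ennreal B * (indicator {0..\<tau>} s * W\<alpha> s) \<partial>lborel)"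
      by (rule nn_integral_cmult[symmetric]) measurable
    then show ?thesis
      unfolding G_def W\<alpha>_def using B by (simp add: heat_cmult mult.left_commute)
  qed
  have "G t < \<infinity>" using fin by (simp add: G_eq duhamel_def)
  moreover have "AE \<sigma> in lborel. 0 < \<sigma> \<longrightarrow> \<sigma> < t \<longrightarrow> ennreal (enn2real (G \<sigma>) powr \<alpha>) \<le> W\<alpha> \<sigma>"
    using super
  proof (eventually_elim, intro impI)
    fix \<sigma>
    assume "0 < \<sigma> \<longrightarrow> \<sigma> < t \<longrightarrow> (AE y in lborel. duhamel w ?F \<sigma> y \<le> ennreal (V (\<sigma>, y)))"
      and \<sigma>: "0 < \<sigma>" "\<sigma> < t"
    then have super_\<sigma>: "AE y in lborel. duhamel w ?F \<sigma> y \<le> ennreal (V (\<sigma>, y))" by simp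
    let ?W = "heat (\<lambda>z. V (\<sigma>, z)) (t - \<sigma>) x"
    have "G \<sigma> = (\<integral>\<^sup>+y. ennreal (\<Gamma> 0 y (t - \<sigma>) x) * duhamel w ?F \<sigma> y \<partial>lborel)"
      using \<sigma> by (simp add: G_eq heat_duhamel)
    also have "\<dots> \<le> ?W"
      unfolding heat_eq_nn_integral_mult using super_\<sigma>
      by (intro nn_integral_mono_AE) (auto elim!: eventually_mono intro: mult_left_mono)
    finally have "G \<sigma> \<le> ?W" .
    moreover have "(\<lambda>z. V (\<sigma>, z)) \<in> borel_measurable lborel" by measurable
    ultimately show "ennreal (enn2real (G \<sigma>) powr \<alpha>) \<le> W\<alpha> \<sigma>"
      unfolding W\<alpha>_def using \<sigma> V \<alpha> by (intro heat_powr_Jensen) auto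
  qed
  ultimately show ?thesis
    using G_def \<alpha> B t by (intro nn_integral_superlinear_time_bound) auto
qed

lemma duhamel_power_nonlinearity_le:
  fixes f :: "real \<Rightarrow> real" and V :: "real \<times> 'a \<Rightarrow> real" and u :: "real \<Rightarrow> 'a \<Rightarrow> ennreal"
  assumes f: "\<And>r. r \<ge> 0 \<Longrightarrow> B * r powr \<alpha> \<le> f r" and "B \<ge> 0" and "\<alpha> \<ge> 0"
    and w: "\<And>y. w y \<le> w' y"
    and V: "\<And>s y. s \<in> {0..t} \<Longrightarrow> 0 \<le> V (s, y) \<and> V (s, y) \<le> enn2real (u s y)"
  shows "duhamel w (\<lambda>s y. B * V (s, y) powr \<alpha>) t x \<le> duhamel w' (\<lambda>s y. f (enn2real (u s y))) t x"
proof (rule duhamel_mono[OF w])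
  fix s y assume s: "s \<in> {0..t}"
  have "B * V (s, y) powr \<alpha> \<le> B * enn2real (u s y) powr \<alpha>"
    using V[OF s] \<open>B \<ge> 0\<close> \<open>\<alpha> \<ge> 0\<close> by (intro mult_left_mono powr_mono2) auto
  also have "\<dots> \<le> f (enn2real (u s y))" by (rule f) simp
  finally show "B * V (s, y) powr \<alpha> \<le> f (enn2real (u s y))" .
qed

lemma duhamel_power_supersolution_of_minorant:
  fixes f :: "real \<Rightarrow> real" and V :: "real \<times> 'a \<Rightarrow> real" and u :: "real \<Rightarrow> 'a \<Rightarrow> ennreal"
  assumes f: "\<And>r. r \<ge> 0 \<Longrightarrow> B * r powr \<alpha> \<le> f r" and "B \<ge> 0" and "\<alpha> \<ge> 0"
    and w: "\<And>y. w y \<le> w' y" and V: "\<And>z. 0 \<le> V z"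
    and V_le: "\<And>z. z \<in> {0..T} \<times> UNIV \<Longrightarrow> V z \<le> enn2real (u (fst z) (snd z))"
    and V_eq: "AE z in lborel. z \<in> {0..T} \<times> UNIV \<longrightarrow> V z = enn2real (u (fst z) (snd z))"
    and u_fin: "AE z in lborel. fst z \<in> {0..T} \<longrightarrow> u (fst z) (snd z) < \<infinity>"
    and u_super: "AE z in lborel. fst z \<in> {0..T} \<longrightarrow>
      duhamel w' (\<lambda>s y. f (enn2real (u s y))) (fst z) (snd z) \<le> u (fst z) (snd z)"
  shows "AE z in lborel. fst z \<in> {0..T} \<longrightarrow>
    duhamel w (\<lambda>s y. B * V (s, y) powr \<alpha>) (fst z) (snd z) \<le> ennreal (V z)"
  using V_eq u_fin u_super
proof eventually_elim
  case (elim z)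
  show ?case
  proof
    assume z0: "fst z \<in> {0..T}"
    then have z: "z \<in> {0..T} \<times> UNIV" by (simp add: mem_Times_iff)
    have "0 \<le> V (s, y) \<and> V (s, y) \<le> enn2real (u s y)" if "s \<in> {0..fst z}" for s y
      using V V_le[of "(s, y)"] that z by auto
    then have "duhamel w (\<lambda>s y. B * V (s, y) powr \<alpha>) (fst z) (snd z)
        \<le> duhamel w' (\<lambda>s y. f (enn2real (u s y))) (fst z) (snd z)"
      using f assms(2,3) w by (intro duhamel_power_nonlinearity_le) auto
    also have "\<dots> \<le> u (fst z) (snd z)"
      using elim(3) z0 by (rule mp)
    also have "\<dots> = ennreal (V z)"
      using mp[OF elim(2) z0] elim(1) z by simp
    finally show "duhamel w (\<lambda>s y. B * V (s, y) powr \<alpha>) (fst z) (snd z) \<le> ennreal (V z)" .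
  qed
qed

lemma heat_supersolution_bound_ae:
  fixes w :: "'a \<Rightarrow> real" and V :: "real \<times> 'a \<Rightarrow> real" and B T \<alpha> :: real
  assumes [measurable]: "w \<in> borel_measurable lborel" "V \<in> borel_measurable lborel"
    and V: "\<And>z. 0 \<le> V z" and \<alpha>: "\<alpha> > 1" and B: "B > 0"
    and super: "AE z in lborel. fst z \<in> {0..T} \<longrightarrow>
      duhamel w (\<lambda>s y. B * V (s, y) powr \<alpha>) (fst z) (snd z) \<le> ennreal (V z)"
  shows "AE t in lborel. t \<in> {0<..T} \<longrightarrow>
    (AE x in lborel. heat w t x \<le> ennreal (((\<alpha> - 1) * B * t) powr (-1 / (\<alpha> - 1))))"
proof -
  let ?F = "\<lambda>s y. B * V (s, y) powr \<alpha>"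
  have V_prod: "V \<in> borel_measurable (lborel \<Otimes>\<^sub>M lborel)" by (simp add: lborel_prod)
  have "AE z in (lborel \<Otimes>\<^sub>M lborel :: (real \<times> 'a) measure). fst z \<in> {0..T} \<longrightarrow>
      duhamel w ?F (fst z) (snd z) \<le> ennreal (V z)"
    using super by (simp only: lborel_prod)
  from lborel_pair.AE_pair[OF this]
  have sliced: "AE t in lborel. t \<in> {0..T} \<longrightarrow> (AE x in lborel. duhamel w ?F t x \<le> ennreal (V (t, x)))"
    by simp
  then show ?thesis
  proof (eventually_elim, intro impI)
    fix t
    assume "t \<in> {0..T} \<longrightarrow> (AE x in lborel. duhamel w ?F t x \<le> ennreal (V (t, x)))" and t: "t \<in> {0<..T}"
    then have "AE x in lborel. duhamel w ?F t x \<le> ennreal (V (t, x))" by simp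
    have before_t: "AE \<tau> in lborel. 0 < \<tau> \<longrightarrow> \<tau> < t \<longrightarrow>
        (AE y in lborel. duhamel w ?F \<tau> y \<le> ennreal (V (\<tau>, y)))"
      using sliced by eventually_elim (use t in auto)
    from \<open>AE x in lborel. duhamel w ?F t x \<le> ennreal (V (t, x))\<close>
    show "AE x in lborel. heat w t x \<le> ennreal (((\<alpha> - 1) * B * t) powr (-1 / (\<alpha> - 1)))"
    proof eventually_elim
      case (elim x)
      then show ?case
        using t by (intro heat_supersolution_bound[OF assms(1) V_prod V \<alpha> B _ before_t])
          (auto intro: le_less_trans)
    qed
  qed
qed

lemma esssup_heat_supersolution_bound:
  fixes w :: "'a \<Rightarrow> real" and V :: "real \<times> 'a \<Rightarrow> real" and B T \<alpha> :: real
  assumes [measurable]: "w \<in> borel_measurable lborel" "V \<in> borel_measurable lborel"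
    and V: "\<And>z. 0 \<le> V z" and \<alpha>: "\<alpha> > 1" and B: "B > 0"
    and super: "AE z in lborel. fst z \<in> {0..T} \<longrightarrow>
      duhamel w (\<lambda>s y. B * V (s, y) powr \<alpha>) (fst z) (snd z) \<le> ennreal (V z)"
  shows "AE t in lborel. t \<in> {0..T} \<longrightarrow>
    ennreal (t powr (1 / (\<alpha> - 1))) * esssup lebesgue (\<lambda>x. heat w t x)
      \<le> ennreal ((B * (\<alpha> - 1)) powr (-1 / (\<alpha> - 1)))"
  using heat_supersolution_bound_ae[OF assms]
proof (eventually_elim, intro impI)
  fix t
  assume bound: "t \<in> {0<..T} \<longrightarrow>
      (AE x in lborel. heat w t x \<le> ennreal (((\<alpha> - 1) * B * t) powr (-1 / (\<alpha> - 1))))"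
    and t: "t \<in> {0..T}"
  show "ennreal (t powr (1 / (\<alpha> - 1))) * esssup lebesgue (\<lambda>x. heat w t x)
      \<le> ennreal ((B * (\<alpha> - 1)) powr (-1 / (\<alpha> - 1)))"
  proof (cases "t = 0")
    case False
    then have "t > 0" using t by simp
    have "(\<lambda>x. heat w t x) \<in> borel_measurable lborel" unfolding heat_def by measurable
    moreover have "AE x in lborel. heat w t x \<le> ennreal (((\<alpha> - 1) * B * t) powr (-1 / (\<alpha> - 1)))"
      using bound t \<open>t > 0\<close> by simp
    ultimately have "esssup lebesgue (\<lambda>x. heat w t x) \<le> ennreal (((\<alpha> - 1) * B * t) powr (-1 / (\<alpha> - 1)))"
      by (intro esssup_I measurable_completion AE_completion)
    then have "ennreal (t powr (1 / (\<alpha> - 1))) * esssup lebesgue (\<lambda>x. heat w t x)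
        \<le> ennreal (t powr (1 / (\<alpha> - 1)) * ((\<alpha> - 1) * B * t) powr (-1 / (\<alpha> - 1)))"
      by (simp add: ennreal_mult mult_left_mono)
    then show ?thesis using powr_blowup_scaling[OF \<open>t > 0\<close> B \<alpha>] by simp
  qed simp
qed

lemma duhamel_lebesgue:
  "duhamel w F t x = (\<integral>\<^sup>+y. ennreal (\<Gamma> 0 y t x * w y) \<partial>lebesgue)
    + (\<integral>\<^sup>+\<tau>\<in>{0..t}. (\<integral>\<^sup>+y. ennreal (\<Gamma> 0 y (t - \<tau>) x * F \<tau> y) \<partial>lebesgue) \<partial>lebesgue)"
  unfolding duhamel_def heat_def nn_integral_completion by (simp add: mult.commute)

end

theorem lemma3p6:
  fixes X :: "nat \<Rightarrow> real^'n \<Rightarrow> real^'n" and m :: nat and \<sigma> :: "'n \<Rightarrow> nat"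
    and \<Gamma> :: "real \<Rightarrow> real^'n \<Rightarrow> real \<Rightarrow> real^'n \<Rightarrow> real"
    and f :: "real \<Rightarrow> real" and B \<alpha> T :: real
    and v0 :: "real^'n \<Rightarrow> real" and v :: "real \<Rightarrow> real^'n \<Rightarrow> ennreal"
  assumes setting: "hormander_setting X m \<sigma>"
    and kernel: "heat_kernel X m \<Gamma>"
    and f_loc: "\<forall>b\<ge>0. set_integrable lebesgue {0..b} f"
    and f_ge: "\<forall>u\<ge>0. f u \<ge> B * u powr \<alpha>"
    and B_pos: "B > 0" and alpha: "\<alpha> > 1"
    and T_pos: "T > 0"
    and v0_nonneg: "\<forall>y. v0 y \<ge> 0"
    and v0_meas: "v0 \<in> borel_measurable lebesgue"
    and v_meas: "(\<lambda>z. v (fst z) (snd z)) \<in> borel_measurable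
                    (restrict_space (lebesgue :: (real \<times> (real^'n)) measure) ({0..T} \<times> UNIV))"
    and v_fin: "AE z in (lebesgue :: (real \<times> (real^'n)) measure).
                  fst z \<in> {0..T} \<longrightarrow> v (fst z) (snd z) < \<infinity>"
    and v_super: "AE z in (lebesgue :: (real \<times> (real^'n)) measure). fst z \<in> {0..T} \<longrightarrow>
        v (fst z) (snd z) \<ge>
          (\<integral>\<^sup>+ y. ennreal (\<Gamma> 0 y (fst z) (snd z) * v0 y) \<partial>lebesgue)
        + (\<integral>\<^sup>+ \<tau> \<in> {0..fst z}.
             (\<integral>\<^sup>+ y. ennreal (\<Gamma> 0 y (fst z - \<tau>) (snd z) * f (enn2real (v \<tau> y))) \<partial>lebesgue) \<partial>lebesgue)"
  shows "AE t in lebesgue. t \<in> {0..T} \<longrightarrow>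
           ennreal (t powr (1 / (\<alpha> - 1))) *
             esssup (lebesgue :: (real^'n) measure) (\<lambda>x. \<integral>\<^sup>+ y. ennreal (\<Gamma> 0 y t x * v0 y) \<partial>lebesgue)
           \<le> ennreal ((B * (\<alpha> - 1)) powr (- 1 / (\<alpha> - 1)))"
proof -
  have "heat_semigroup \<Gamma>"
    using kernel unfolding heat_kernel_def heat_semigroup_def by blast
  then interpret heat_semigroup \<Gamma> .
  have "(\<lambda>y. ennreal (v0 y)) \<in> borel_measurable lebesgue" using v0_meas by measurable
  then obtain w0 where w0: "w0 \<in> borel_measurable lborel"
    "\<And>y. w0 y \<le> enn2real (ennreal (v0 y))" "AE y in lborel. w0 y = enn2real (ennreal (v0 y))"
    using completion_borel_minorant by blast
  note w0 = w0[unfolded enn2real_ennreal[OF v0_nonneg[rule_format]]]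
  have "{0..T} \<times> (UNIV :: (real^'n) set) \<in> sets lborel"
    unfolding sets_lborel by (intro borel_closed closed_Times) auto
  with v_meas obtain V where V: "V \<in> borel_measurable lborel" "\<And>z. 0 \<le> V z"
    "\<And>z. z \<in> {0..T} \<times> UNIV \<Longrightarrow> V z \<le> enn2real (v (fst z) (snd z))"
    "AE z in lborel. z \<in> {0..T} \<times> UNIV \<longrightarrow> V z = enn2real (v (fst z) (snd z))"
    by (rule restrict_space_completion_borel_minorant) blast
  have super: "AE z in lborel. fst z \<in> {0..T} \<longrightarrow>
      duhamel w0 (\<lambda>s y. B * V (s, y) powr \<alpha>) (fst z) (snd z) \<le> ennreal (V z)"
    using f_ge B_pos alpha w0(2) V v_fin v_super unfolding AE_completion_iff duhamel_lebesgue[symmetric]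
    by (intro duhamel_power_supersolution_of_minorant) auto
  have "(\<integral>\<^sup>+ y. ennreal (\<Gamma> 0 y t x * v0 y) \<partial>lebesgue) = heat w0 t x" for t x
    unfolding heat_def nn_integral_completion using w0(3)
    by (intro nn_integral_cong_AE) (auto elim!: eventually_mono)
  then show ?thesis
    unfolding AE_completion_iff
    using esssup_heat_supersolution_bound[OF w0(1) V(1) V(2) alpha B_pos super] by simp
qed

end
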